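(* Let $\mathcal{X}$ be a probability distribution over a set of queries, $k \geq 1$, and $\hat q_1,\dots,\hat q_k,\hat c_1,\dots,\hat c_k : \mathcal{X} \to \mathbb{R}$ integrable functions. Let $0 \leq \lambda_1 < \lambda_2$ and let $s^{(1)} \in S_{\lambda_1}$, $s^{(2)} \in S_{\lambda_2}$ be arbitrary. Then $$\mathbb{E}_{x \sim \mathcal{X}}\left[\sum_{i=1}^k s^{(1)}_i(x)\hat c_i(x)\right] \geqslant \mathbb{E}_{x \sim \mathcal{X}}\left[\sum_{i=1}^k s^{(2)}_i(x)\hat c_i(x)\right].$$
   Context: A routing strategy is a measurable function $s : \mathcal{X} \to \mathbb{R}^k$ with $s_i(x) \geq 0$ for all $i$ and $\sum_{i=1}^k s_i(x) = 1$ for all $x$. For $\lambda \in \mathbb{R}^+$, $S_\lambda$ is the set of routing strategies $s$ such that for all $x \in \mathcal{X}$ and $i \in \{1,\dots,k\}$: if $\hat q_i(x) - \lambda \hat c_i(x) < \max_j(\hat q_j(x) - \lambda \hat c_j(x))$ then $s_i(x) = 0$. *)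

theory Defs
  imports "HOL-Probability.Probability"
begin

definition routing_strategy :: "'a measure \<Rightarrow> nat \<Rightarrow> ('a \<Rightarrow> nat \<Rightarrow> real) \<Rightarrow> bool" where
  "routing_strategy M k s \<longleftrightarrow>
     (\<forall>i\<in>{1..k}. (\<lambda>x. s x i) \<in> borel_measurable M) \<and>
     (\<forall>x\<in>space M. (\<forall>i\<in>{1..k}. s x i \<ge> 0) \<and> (\<Sum>i=1..k. s x i) = 1)"

definition S_lambda :: "'a measure \<Rightarrow> nat \<Rightarrow> (nat \<Rightarrow> 'a \<Rightarrow> real) \<Rightarrow> (nat \<Rightarrow> 'a \<Rightarrow> real)
    \<Rightarrow> real \<Rightarrow> ('a \<Rightarrow> nat \<Rightarrow> real) set" where
  "S_lambda M k q c lam = {s. routing_strategy M k s \<and>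
     (\<forall>x\<in>space M. \<forall>i\<in>{1..k}.
        q i x - lam * c i x < Max ((\<lambda>j. q j x - lam * c j x) ` {1..k}) \<longrightarrow> s x i = 0)}"

end

theory Submission
  imports Defs
begin

text \<open>The inequality already holds pointwise. At a query x, if s1 puts weight on i and s2 on j,
  then i maximizes q - lam1 c and j maximizes q - lam2 c; adding the two optimality inequalities
  gives (lam2 - lam1) (c i - c j) \<ge> 0, so c j \<le> c i. Since both weight vectors are probability
  vectors, the difference of the expected costs is the double sum of s1 i s2 j (c i - c j) \<ge> 0.\<close>

lemma cost_le_of_maximizers:
  fixes lam1 lam2 :: real
  assumes "lam1 < lam2"
    and "q j - lam1 * c j \<le> q i - lam1 * c i"
    and "q i - lam2 * c i \<le> q j - lam2 * c j"
  shows "c j \<le> c i"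
proof -
  have "0 \<le> (lam2 - lam1) * (c i - c j)"
    using assms(2,3) by (simp add: algebra_simps)
  then show ?thesis
    using assms(1) by (simp add: zero_le_mult_iff)
qed

lemma weighted_sum_le_of_support_order:
  fixes p r a :: "'i \<Rightarrow> real"
  assumes "\<And>i. i \<in> I \<Longrightarrow> 0 \<le> p i" and "sum p I = 1"
    and "\<And>j. j \<in> I \<Longrightarrow> 0 \<le> r j" and "sum r I = 1"
    and "\<And>i j. i \<in> I \<Longrightarrow> j \<in> I \<Longrightarrow> p i \<noteq> 0 \<Longrightarrow> r j \<noteq> 0 \<Longrightarrow> a j \<le> a i"
  shows "(\<Sum>j\<in>I. r j * a j) \<le> (\<Sum>i\<in>I. p i * a i)"
proof -
  have "(\<Sum>i\<in>I. p i * a i) = (\<Sum>i\<in>I. p i * a i * sum r I)"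
    using assms(4) by simp
  also have "\<dots> = (\<Sum>i\<in>I. \<Sum>j\<in>I. p i * r j * a i)"
    by (simp add: sum_distrib_left mult_ac)
  finally have p_side: "(\<Sum>i\<in>I. p i * a i) = (\<Sum>i\<in>I. \<Sum>j\<in>I. p i * r j * a i)" .
  have "(\<Sum>j\<in>I. r j * a j) = (\<Sum>i\<in>I. p i * (\<Sum>j\<in>I. r j * a j))"
    using assms(2) by (simp add: sum_distrib_right [symmetric])
  also have "\<dots> = (\<Sum>i\<in>I. \<Sum>j\<in>I. p i * r j * a j)"
    by (simp add: sum_distrib_left mult_ac)
  finally have r_side: "(\<Sum>j\<in>I. r j * a j) = (\<Sum>i\<in>I. \<Sum>j\<in>I. p i * r j * a j)" .
  have "0 \<le> p i * r j * (a i - a j)" if "i \<in> I" "j \<in> I" for i j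
  proof (cases "p i = 0 \<or> r j = 0")
    case False
    then show ?thesis
      using assms(1) [of i] assms(3) [of j] assms(5) [of i j] that by simp
  qed auto
  then have "0 \<le> (\<Sum>i\<in>I. \<Sum>j\<in>I. p i * r j * (a i - a j))"
    by (intro sum_nonneg) auto
  then show ?thesis
    unfolding p_side r_side by (simp add: sum_subtractf right_diff_distrib)
qed

lemma routing_strategy_le_one:
  assumes "routing_strategy M k s" "x \<in> space M" "i \<in> {1..k}"
  shows "s x i \<le> 1"
proof -
  have "s x i \<le> (\<Sum>j=1..k. s x j)"
    using assms by (intro member_le_sum) (auto simp: routing_strategy_def)
  then show ?thesis
    using assms(1,2) by (simp add: routing_strategy_def)
qed

lemma integrable_routing_strategy_sum:
  fixes f :: "nat \<Rightarrow> 'a \<Rightarrow> real"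
  assumes s: "routing_strategy M k s"
    and f: "\<And>i. i \<in> {1..k} \<Longrightarrow> integrable M (f i)"
  shows "integrable M (\<lambda>x. \<Sum>i=1..k. s x i * f i x)"
proof (rule Bochner_Integration.integrable_sum)
  fix i assume i: "i \<in> {1..k}"
  show "integrable M (\<lambda>x. s x i * f i x)"
  proof (rule Bochner_Integration.integrable_bound [OF f [OF i]])
    show "(\<lambda>x. s x i * f i x) \<in> borel_measurable M"
      using s f [OF i] i by (intro borel_measurable_times) (auto simp: routing_strategy_def)
    show "AE x in M. norm (s x i * f i x) \<le> norm (f i x)"
    proof (rule AE_I2)
      fix x assume x: "x \<in> space M"
      have "0 \<le> s x i" "s x i \<le> 1"
        using s x i routing_strategy_le_one [OF s x i] by (auto simp: routing_strategy_def)
      then show "norm (s x i * f i x) \<le> norm (f i x)"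
        by (simp add: abs_mult mult_left_le_one_le)
    qed
  qed
qed

lemma S_lambda_support_maximizes:
  assumes "s \<in> S_lambda M k q c lam" "x \<in> space M"
    and "i \<in> {1..k}" "j \<in> {1..k}" "s x i \<noteq> 0"
  shows "q j x - lam * c j x \<le> q i x - lam * c i x"
proof -
  let ?v = "\<lambda>l. q l x - lam * c l x"
  have "\<not> ?v i < Max (?v ` {1..k})"
    using assms by (auto simp: S_lambda_def)
  moreover have "?v j \<le> Max (?v ` {1..k})"
    using assms(4) by (intro Max_ge) auto
  ultimately show ?thesis by linarith
qed

lemma S_lambda_cost_antimono:
  assumes "lam1 < lam2"
    and s1: "s1 \<in> S_lambda M k q c lam1" and s2: "s2 \<in> S_lambda M k q c lam2"
    and x: "x \<in> space M"
  shows "(\<Sum>i=1..k. s2 x i * c i x) \<le> (\<Sum>i=1..k. s1 x i * c i x)"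
proof (rule weighted_sum_le_of_support_order [where p = "s1 x" and r = "s2 x" and a = "\<lambda>i. c i x"])
  show "\<And>i. i \<in> {1..k} \<Longrightarrow> 0 \<le> s1 x i" "(\<Sum>i=1..k. s1 x i) = 1"
    "\<And>j. j \<in> {1..k} \<Longrightarrow> 0 \<le> s2 x j" "(\<Sum>j=1..k. s2 x j) = 1"
    using s1 s2 x by (auto simp: S_lambda_def routing_strategy_def)
  fix i j assume ij: "i \<in> {1..k}" "j \<in> {1..k}" and "s1 x i \<noteq> 0" "s2 x j \<noteq> 0"
  then have "q j x - lam1 * c j x \<le> q i x - lam1 * c i x"
    and "q i x - lam2 * c i x \<le> q j x - lam2 * c j x"
    by (auto intro: S_lambda_support_maximizes [OF s1 x] S_lambda_support_maximizes [OF s2 x])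
  then show "c j x \<le> c i x"
    by (rule cost_le_of_maximizers [OF \<open>lam1 < lam2\<close>])
qed

theorem lemma3:
  fixes M :: "'a measure" and k :: nat
    and q c :: "nat \<Rightarrow> 'a \<Rightarrow> real"
    and lam1 lam2 :: real
    and s1 s2 :: "'a \<Rightarrow> nat \<Rightarrow> real"
  assumes "prob_space M"
    and "k \<ge> 1"
    and "\<And>i. i \<in> {1..k} \<Longrightarrow> integrable M (q i)"
    and "\<And>i. i \<in> {1..k} \<Longrightarrow> integrable M (c i)"
    and "0 \<le> lam1" and "lam1 < lam2"
    and "s1 \<in> S_lambda M k q c lam1"
    and "s2 \<in> S_lambda M k q c lam2"
  shows "(\<integral>x. (\<Sum>i=1..k. s1 x i * c i x) \<partial>M) \<ge> (\<integral>x. (\<Sum>i=1..k. s2 x i * c i x) \<partial>M)"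
proof (rule integral_mono)
  have "routing_strategy M k s1" "routing_strategy M k s2"
    using assms(7,8) by (simp_all add: S_lambda_def)
  then show "integrable M (\<lambda>x. \<Sum>i=1..k. s1 x i * c i x)"
    "integrable M (\<lambda>x. \<Sum>i=1..k. s2 x i * c i x)"
    using assms(4) by (blast intro: integrable_routing_strategy_sum)+
  show "\<And>x. x \<in> space M \<Longrightarrow> (\<Sum>i=1..k. s2 x i * c i x) \<le> (\<Sum>i=1..k. s1 x i * c i x)"
    using S_lambda_cost_antimono [OF assms(6,7,8)] .
qed

end
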